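(* Let $(\mathcal X,d)$ be a metric space and $M>0$ an integer, and suppose $\mathcal X$ contains two $M$-configurations $P$ and $Q$ with $d(u,v)\ge 4$ for all $u\in P$, $v\in Q$. Let $b\le M/2$ be a nonnegative integer. Then there is no deterministic incremental algorithm with $b$ bits of storage that, for every finite set $D\subset\mathcal X$ which has a unique nice $3$-clustering $\mathcal C$ and for every ordering of $D$, outputs $\mathcal C$ after processing $D$ in that order.
   Context: A clustering of a set $D$ is a set of nonempty, pairwise disjoint subsets (clusters) whose union is $D$; a $k$-clustering has exactly $k$ clusters. Write $x\sim_{\mathcal C}y$ if $x,y$ are in the same cluster of $\mathcal C$ and $x\not\sim_{\mathcal C}y$ otherwise. A clustering $\mathcal C$ of $(D,d)$ is nice if for all $x,y,z\in D$: $d(y,x)<d(z,x)$ whenever $x\sim_{\mathcal C}y$ and $x\not\sim_{\mathcal C}z$. For an integer $M>0$, an $M$-configuration in a metric space $(\mathcal X,d)$ is a collection of $2M+1$ points $x_o,x_1,\ldots,x_M,x_1',\ldots,x_M'\in\mathcal X$ such that: (i) all pairwise distances among them lie in $[1,2]$; (ii) $d(x_o,x_i),d(x_o,x_i')\in(3/2,2]$ for all $i\ge1$; (iii) $d(x_i,x_j),d(x_i',x_j'),d(x_i,x_j')\in[1,3/2]$ for all $i\ne j$, $i,j\ge 1$; (iv) $d(x_i,x_i')>d(x_o,x_i)$ for all $i\ge1$. A deterministic incremental algorithm with $b$ bits of storage on $\mathcal X$ consists of an initial state $\sigma_0\in\{0,1\}^b$, a transition map $\tau:\{0,1\}^b\times\mathcal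 X\to\{0,1\}^b$, and an output map $\omega$ assigning to each state a partition of $\mathcal X$. On an input sequence $x_1,\ldots,x_n$ it computes states $\sigma_m=\tau(\sigma_{m-1},x_m)$ for $m=1,\ldots,n$, and its output is $\omega(\sigma_n)$; it outputs a clustering $\mathcal C$ of $D=\{x_1,\ldots,x_n\}$ if the restriction of $\omega(\sigma_n)$ to $D$ equals $\mathcal C$. *)

theory Defs
  imports Complex_Main
begin

definition clustering :: "'a set set \<Rightarrow> 'a set \<Rightarrow> bool" where
  "clustering C D \<longleftrightarrow> (\<forall>c\<in>C. c \<noteq> {}) \<and>
     (\<forall>c1\<in>C. \<forall>c2\<in>C. c1 \<noteq> c2 \<longrightarrow> c1 \<inter> c2 = {}) \<and> \<Union>C = D"

definition k_clustering :: "nat \<Rightarrow> 'a set set \<Rightarrow> 'a set \<Rightarrow> bool" where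
  "k_clustering k C D \<longleftrightarrow> clustering C D \<and> finite C \<and> card C = k"

definition same_cluster :: "'a set set \<Rightarrow> 'a \<Rightarrow> 'a \<Rightarrow> bool" where
  "same_cluster C x y \<longleftrightarrow> (\<exists>c\<in>C. x \<in> c \<and> y \<in> c)"

definition nice :: "'a::metric_space set set \<Rightarrow> 'a set \<Rightarrow> bool" where
  "nice C D \<longleftrightarrow> (\<forall>x\<in>D. \<forall>y\<in>D. \<forall>z\<in>D.
      same_cluster C x y \<and> \<not> same_cluster C x z \<longrightarrow> dist y x < dist z x)"

definition M_configuration :: "nat \<Rightarrow> 'a::metric_space set \<Rightarrow> bool" where
  "M_configuration M P \<longleftrightarrow> (\<exists>xo x x'.
     P = {xo} \<union> x ` {1..M} \<union> x' ` {1..M} \<and> card P = 2 * M + 1 \<and>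
     (\<forall>u\<in>P. \<forall>v\<in>P. u \<noteq> v \<longrightarrow> 1 \<le> dist u v \<and> dist u v \<le> 2) \<and>
     (\<forall>i\<in>{1..M}. 3/2 < dist xo (x i) \<and> dist xo (x i) \<le> 2 \<and>
                  3/2 < dist xo (x' i) \<and> dist xo (x' i) \<le> 2) \<and>
     (\<forall>i\<in>{1..M}. \<forall>j\<in>{1..M}. i \<noteq> j \<longrightarrow>
        dist (x i) (x j) \<in> {1..3/2} \<and> dist (x' i) (x' j) \<in> {1..3/2} \<and>
        dist (x i) (x' j) \<in> {1..3/2}) \<and>
     (\<forall>i\<in>{1..M}. dist (x i) (x' i) > dist xo (x i)))"

definition incremental_alg ::
  "nat \<Rightarrow> bool list \<Rightarrow> (bool list \<Rightarrow> 'a \<Rightarrow> bool list) \<Rightarrow> (bool list \<Rightarrow> 'a set set) \<Rightarrow> bool" where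
  "incremental_alg b \<sigma>0 \<tau> \<omega> \<longleftrightarrow> length \<sigma>0 = b \<and>
     (\<forall>s x. length s = b \<longrightarrow> length (\<tau> s x) = b) \<and>
     (\<forall>s. length s = b \<longrightarrow> clustering (\<omega> s) UNIV)"

definition run_alg :: "bool list \<Rightarrow> (bool list \<Rightarrow> 'a \<Rightarrow> bool list) \<Rightarrow> 'a list \<Rightarrow> bool list" where
  "run_alg \<sigma>0 \<tau> xs = foldl \<tau> \<sigma>0 xs"

definition restrict_partition :: "'a set set \<Rightarrow> 'a set \<Rightarrow> 'a set set" where
  "restrict_partition P D = {c \<inter> D | c. c \<in> P \<and> c \<inter> D \<noteq> {}}"

definition unique_nice_3_clustering :: "'a::metric_space set set \<Rightarrow> 'a set \<Rightarrow> bool" where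
  "unique_nice_3_clustering C D \<longleftrightarrow> k_clustering 3 C D \<and> nice C D \<and>
     (\<forall>C'. k_clustering 3 C' D \<and> nice C' D \<longrightarrow> C' = C)"

end

theory Submission
  imports Defs
begin

text \<open>Split the two configurations by index: for S \<subseteq> {1..M} feed the algorithm x i for
  i \<in> S and y i for i \<notin> S. There are almost 2^M such prefixes but at most 2^b \<le> 2^(M/2) states,
  so two prefixes S \<noteq> T, say with j \<in> S - T, end in the same state. Appending one common suffix
  produces, on one side, the centre and x' j together with x j and some other x k, which a nice
  3-clustering must keep in one cluster, and on the other side the centre and x' j without x j,
  which forces the centre into a singleton cluster. Both data sets have a unique nice
  3-clustering, and the two disagree on the centre and x' j although the algorithm is in the same
  state. For M = 1 there is only the empty state, and three small data sets already force
  contradictory outputs.\<close>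

lemma clustering_cluster_nonempty: "clustering C D \<Longrightarrow> K \<in> C \<Longrightarrow> K \<noteq> {}"
  unfolding clustering_def by simp

lemma clustering_cluster_subset: "clustering C D \<Longrightarrow> K \<in> C \<Longrightarrow> K \<subseteq> D"
  unfolding clustering_def by auto

lemma clustering_cluster_unique:
  "clustering C D \<Longrightarrow> K \<in> C \<Longrightarrow> K' \<in> C \<Longrightarrow> x \<in> K \<Longrightarrow> x \<in> K' \<Longrightarrow> K = K'"
  unfolding clustering_def by auto

lemma clustering_obtain_cluster:
  assumes "clustering C D" "x \<in> D"
  obtains K where "K \<in> C" "x \<in> K"
  using assms unfolding clustering_def by auto

lemma same_cluster_refl: "clustering C D \<Longrightarrow> x \<in> D \<Longrightarrow> same_cluster C x x"
  unfolding same_cluster_def by (metis clustering_obtain_cluster)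

lemma same_cluster_sym: "same_cluster C x y \<Longrightarrow> same_cluster C y x"
  unfolding same_cluster_def by blast

lemma same_cluster_trans:
  "clustering C D \<Longrightarrow> same_cluster C x y \<Longrightarrow> same_cluster C y z \<Longrightarrow> same_cluster C x z"
  unfolding same_cluster_def by (metis clustering_cluster_unique)

lemma clustering_cluster_eq_class:
  assumes C: "clustering C D" and K: "K \<in> C" "x \<in> K"
  shows "K = {y \<in> D. same_cluster C x y}"
  using clustering_cluster_subset[OF C K(1)] clustering_cluster_unique[OF C K(1)] K
  unfolding same_cluster_def by blast

lemma clustering_eq_classes:
  assumes "clustering C D"
  shows "C = (\<lambda>x. {y \<in> D. same_cluster C x y}) ` D"
proof (intro equalityI subsetI)
  fix K assume K: "K \<in> C"
  then obtain x where "x \<in> K" using clustering_cluster_nonempty[OF assms] by blast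
  with K show "K \<in> (\<lambda>x. {y \<in> D. same_cluster C x y}) ` D"
    using clustering_cluster_eq_class[OF assms] clustering_cluster_subset[OF assms] by blast
next
  fix K assume "K \<in> (\<lambda>x. {y \<in> D. same_cluster C x y}) ` D"
  then obtain x where "x \<in> D" "K = {y \<in> D. same_cluster C x y}" by blast
  then show "K \<in> C"
    using clustering_obtain_cluster[OF assms] clustering_cluster_eq_class[OF assms] by metis
qed

lemma clustering_eqI_same_cluster:
  assumes "clustering C D" "clustering C' D"
    and "\<And>x y. x \<in> D \<Longrightarrow> y \<in> D \<Longrightarrow> same_cluster C x y \<longleftrightarrow> same_cluster C' x y"
  shows "C = C'"
proof -
  have "(\<lambda>x. {y \<in> D. same_cluster C x y}) ` D = (\<lambda>x. {y \<in> D. same_cluster C' x y}) ` D"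
    using assms(3) by (intro image_cong) auto
  then show ?thesis
    using clustering_eq_classes[OF assms(1)] clustering_eq_classes[OF assms(2)] by simp
qed

lemma niceD:
  "nice C D \<Longrightarrow> x \<in> D \<Longrightarrow> y \<in> D \<Longrightarrow> z \<in> D \<Longrightarrow> same_cluster C x y \<Longrightarrow> \<not> same_cluster C x z
    \<Longrightarrow> dist y x < dist z x"
  unfolding nice_def by blast

lemma same_cluster_restrict_partition:
  "x \<in> D \<Longrightarrow> y \<in> D \<Longrightarrow> same_cluster (restrict_partition W D) x y \<longleftrightarrow> same_cluster W x y"
  unfolding restrict_partition_def same_cluster_def by auto

lemma k_clustering_3_separated_triple:
  assumes "k_clustering 3 C D"
  obtains t1 t2 t3 where "t1 \<in> D" "t2 \<in> D" "t3 \<in> D"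
    "\<not> same_cluster C t1 t2" "\<not> same_cluster C t1 t3" "\<not> same_cluster C t2 t3"
proof -
  have C: "clustering C D" "card C = 3" using assms unfolding k_clustering_def by auto
  then obtain K1 K2 K3 where K: "C = {K1, K2, K3}" "K1 \<noteq> K2" "K2 \<noteq> K3" "K1 \<noteq> K3"
    using card_3_iff by metis
  then have KC: "K1 \<in> C" "K2 \<in> C" "K3 \<in> C" by auto
  then obtain t1 t2 t3 where t: "t1 \<in> K1" "t2 \<in> K2" "t3 \<in> K3"
    using clustering_cluster_nonempty[OF C(1)] by (metis all_not_in_conv)
  have sep: "\<not> same_cluster C s t" if "K \<in> C" "K' \<in> C" "K \<noteq> K'" "s \<in> K" "t \<in> K'" for K K' s t
    using that clustering_cluster_unique[OF C(1)] unfolding same_cluster_def by metis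
  show thesis
    using that[OF _ _ _ sep[OF KC(1,2) K(2) t(1,2)] sep[OF KC(1,3) K(4) t(1,3)] sep[OF KC(2,3) K(3) t(2,3)]]
      t KC clustering_cluster_subset[OF C(1)] by blast
qed

lemma k_clustering_3_no_separated_quadruple:
  assumes C3: "k_clustering 3 C D" and T: "t1 \<in> D" "t2 \<in> D" "t3 \<in> D" "t4 \<in> D"
    and "\<not> same_cluster C t1 t2" "\<not> same_cluster C t1 t3" "\<not> same_cluster C t1 t4"
    "\<not> same_cluster C t2 t3" "\<not> same_cluster C t2 t4" "\<not> same_cluster C t3 t4"
  shows False
proof -
  have C: "clustering C D" "finite C" "card C = 3" using C3 unfolding k_clustering_def by auto
  let ?T = "{t1, t2, t3, t4}"
  let ?class = "\<lambda>x. {y \<in> D. same_cluster C x y}"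
  have separated: "\<not> same_cluster C s t" if "s \<in> ?T" "t \<in> ?T" "s \<noteq> t" for s t
    using that assms(6-11) by (auto dest: same_cluster_sym)
  have "distinct [t1, t2, t3, t4]"
    using assms(6-11) same_cluster_refl[OF C(1)] T by auto
  then have "card ?T = 4" using distinct_card by fastforce
  moreover have "inj_on ?class ?T"
  proof (rule inj_onI)
    fix s t assume "s \<in> ?T" "t \<in> ?T" "?class s = ?class t"
    then have "same_cluster C s t" using T same_cluster_refl[OF C(1)] by blast
    with separated \<open>s \<in> ?T\<close> \<open>t \<in> ?T\<close> show "s = t" by blast
  qed
  ultimately have "card (?class ` ?T) = 4" by (simp only: card_image)
  moreover have "?class ` ?T \<subseteq> C" using T clustering_eq_classes[OF C(1)] by blast
  then have "card (?class ` ?T) \<le> card C" by (rule card_mono[OF C(2)])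
  ultimately show False using C(3) by simp
qed

text \<open>Every nice equivalence relation on U with at most two classes relates all of U. Hence in a
  nice 3-clustering of a data set whose third cluster lies outside U, U is a single cluster.\<close>
definition unsplittable :: "'a::metric_space set \<Rightarrow> bool" where
  "unsplittable U \<longleftrightarrow> (\<forall>R. (\<forall>u\<in>U. R u u) \<and> (\<forall>u v. R u v \<longrightarrow> R v u) \<and>
     (\<forall>u v w. R u v \<longrightarrow> R v w \<longrightarrow> R u w) \<and>
     (\<forall>x\<in>U. \<forall>y\<in>U. \<forall>z\<in>U. R x y \<and> \<not> R x z \<longrightarrow> dist y x < dist z x) \<and>
     (\<forall>x\<in>U. \<forall>y\<in>U. \<forall>z\<in>U. R x y \<or> R x z \<or> R y z) \<longrightarrow> (\<forall>u\<in>U. \<forall>v\<in>U. R u v))"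

lemma unsplittableI:
  assumes "\<And>R u v. (\<And>u. u \<in> U \<Longrightarrow> R u u) \<Longrightarrow> (\<And>u v. R u v \<Longrightarrow> R v u) \<Longrightarrow>
      (\<And>u v w. R u v \<Longrightarrow> R v w \<Longrightarrow> R u w) \<Longrightarrow>
      (\<And>x y z. x \<in> U \<Longrightarrow> y \<in> U \<Longrightarrow> z \<in> U \<Longrightarrow> R x y \<Longrightarrow> \<not> R x z \<Longrightarrow> dist y x < dist z x) \<Longrightarrow>
      (\<And>x y z. x \<in> U \<Longrightarrow> y \<in> U \<Longrightarrow> z \<in> U \<Longrightarrow> R x y \<or> R x z \<or> R y z) \<Longrightarrow>
      u \<in> U \<Longrightarrow> v \<in> U \<Longrightarrow> R u v"
  shows "unsplittable U"
  unfolding unsplittable_def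
proof (intro allI impI ballI)
  fix R u v
  assume "(\<forall>u\<in>U. R u u) \<and> (\<forall>u v. R u v \<longrightarrow> R v u) \<and> (\<forall>u v w. R u v \<longrightarrow> R v w \<longrightarrow> R u w) \<and>
     (\<forall>x\<in>U. \<forall>y\<in>U. \<forall>z\<in>U. R x y \<and> \<not> R x z \<longrightarrow> dist y x < dist z x) \<and>
     (\<forall>x\<in>U. \<forall>y\<in>U. \<forall>z\<in>U. R x y \<or> R x z \<or> R y z)" "u \<in> U" "v \<in> U"
  then show "R u v" by (intro assms[of R u v]) blast+
qed

lemma unsplittableD:
  assumes "unsplittable U" "\<And>u. u \<in> U \<Longrightarrow> R u u" "\<And>u v. R u v \<Longrightarrow> R v u"
    "\<And>u v w. R u v \<Longrightarrow> R v w \<Longrightarrow> R u w"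
    "\<And>x y z. x \<in> U \<Longrightarrow> y \<in> U \<Longrightarrow> z \<in> U \<Longrightarrow> R x y \<Longrightarrow> \<not> R x z \<Longrightarrow> dist y x < dist z x"
    "\<And>x y z. x \<in> U \<Longrightarrow> y \<in> U \<Longrightarrow> z \<in> U \<Longrightarrow> R x y \<or> R x z \<or> R y z"
    "u \<in> U" "v \<in> U"
  shows "R u v"
proof -
  have "\<forall>u\<in>U. \<forall>v\<in>U. R u v"
    using assms(1) unfolding unsplittable_def
  proof (elim allE[of _ R] mp)
    show "(\<forall>u\<in>U. R u u) \<and> (\<forall>u v. R u v \<longrightarrow> R v u) \<and> (\<forall>u v w. R u v \<longrightarrow> R v w \<longrightarrow> R u w) \<and>
     (\<forall>x\<in>U. \<forall>y\<in>U. \<forall>z\<in>U. R x y \<and> \<not> R x z \<longrightarrow> dist y x < dist z x) \<and>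
     (\<forall>x\<in>U. \<forall>y\<in>U. \<forall>z\<in>U. R x y \<or> R x z \<or> R y z)"
      using assms(2-6) by blast
  qed
  then show ?thesis using assms(7,8) by blast
qed

lemma unsplittable_singleton: "unsplittable {e}"
  by (rule unsplittableI) blast

text \<open>If the apex is related to one base point it is related to the other (equal legs);
  otherwise the base points are unrelated too (the base is the longest side), giving three classes.\<close>
lemma unsplittable_isosceles:
  fixes e p p' :: "'a::metric_space"
  assumes legs: "dist e p = dist e p'" and base: "dist e p < dist p p'"
  shows "unsplittable {e, p, p'}"
proof (rule unsplittableI)
  fix R u v
  assume refl: "\<And>u. u \<in> {e, p, p'} \<Longrightarrow> R u u" and sym: "\<And>u v. R u v \<Longrightarrow> R v u"
    and trans: "\<And>u v w. R u v \<Longrightarrow> R v w \<Longrightarrow> R u w"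
    and nice: "\<And>x y z. x \<in> {e, p, p'} \<Longrightarrow> y \<in> {e, p, p'} \<Longrightarrow> z \<in> {e, p, p'} \<Longrightarrow>
      R x y \<Longrightarrow> \<not> R x z \<Longrightarrow> dist y x < dist z x"
    and two: "\<And>x y z. x \<in> {e, p, p'} \<Longrightarrow> y \<in> {e, p, p'} \<Longrightarrow> z \<in> {e, p, p'} \<Longrightarrow> R x y \<or> R x z \<or> R y z"
    and uv: "u \<in> {e, p, p'}" "v \<in> {e, p, p'}"
  have "R e p \<longleftrightarrow> R e p'"
    using nice[of e p p'] nice[of e p' p] legs by (auto simp: dist_commute)
  moreover have "\<not> R p p'" if "\<not> R e p"
    using nice[of p p' e] that sym[of p e] base by (auto simp: dist_commute)
  ultimately have "R e p \<and> R e p'" using two[of e p p'] by auto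
  then have "R e w" if "w \<in> {e, p, p'}" for w using that refl[of e] by blast
  from this[OF uv(1)] this[OF uv(2)] show "R u v" using sym trans by blast
qed

text \<open>If e is related to one point of B but not to another, niceness at the first point puts e
  within \<delta> of it, unless the two points are p and p'; the third point k excludes that. If e is
  related to no point of B, then p and p' are split as well, giving three classes.\<close>
lemma unsplittable_insert_far:
  fixes e :: "'a::metric_space"
  assumes far: "\<And>b. b \<in> B \<Longrightarrow> \<delta> < dist e b"
    and close: "\<And>a a'. a \<in> B \<Longrightarrow> a' \<in> B \<Longrightarrow> {a, a'} \<noteq> {p, p'} \<Longrightarrow> dist a a' \<le> \<delta>"
    and pair: "p \<in> B" "p' \<in> B" "dist e p < dist p p'"
    and third: "k \<in> B" "k \<noteq> p" "k \<noteq> p'"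
  shows "unsplittable (insert e B)"
proof (rule unsplittableI)
  fix R u v
  assume refl: "\<And>u. u \<in> insert e B \<Longrightarrow> R u u" and sym: "\<And>u v. R u v \<Longrightarrow> R v u"
    and trans: "\<And>u v w. R u v \<Longrightarrow> R v w \<Longrightarrow> R u w"
    and nice: "\<And>x y z. x \<in> insert e B \<Longrightarrow> y \<in> insert e B \<Longrightarrow> z \<in> insert e B \<Longrightarrow>
      R x y \<Longrightarrow> \<not> R x z \<Longrightarrow> dist y x < dist z x"
    and two: "\<And>x y z. x \<in> insert e B \<Longrightarrow> y \<in> insert e B \<Longrightarrow> z \<in> insert e B \<Longrightarrow> R x y \<or> R x z \<or> R y z"
    and uv: "u \<in> insert e B" "v \<in> insert e B"
  have split: False if "a \<in> B" "R e a" "b \<in> B" "\<not> R e b" "{a, b} \<noteq> {p, p'}" for a b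
  proof -
    have "dist e a < dist b a" using nice[of a e b] that sym[of e a] trans[of e a b] by blast
    moreover have "dist b a \<le> \<delta>" using close[of b a] that by (metis insert_commute)
    ultimately show False using far[of a] \<open>a \<in> B\<close> by simp
  qed
  have "R e b" if "b \<in> B" for b
  proof (cases "\<exists>a\<in>B. R e a")
    case True
    then obtain a where a: "a \<in> B" "R e a" by blast
    show ?thesis
    proof (rule ccontr)
      assume b: "\<not> R e b"
      have "{a, b} = {p, p'}" using split[OF a that b] by blast
      moreover have "{k, b} \<noteq> {p, p'}" "{a, k} \<noteq> {p, p'}" using third by (auto simp: doubleton_eq_iff)
      ultimately show False
      proof (cases "R e k")
        case True
        from split[OF third(1) True that b] show False using \<open>{k, b} \<noteq> {p, p'}\<close> .
      next
        case False
        from split[OF a third(1) False] show False using \<open>{a, k} \<noteq> {p, p'}\<close> .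
      qed
    qed
  next
    case False
    have "\<not> R p p'" using nice[of p p' e] pair sym[of p e] False by (auto simp: dist_commute)
    moreover have "R e p \<or> R e p' \<or> R p p'" using pair(1,2) by (intro two) simp_all
    ultimately show ?thesis using pair(1,2) False by blast
  qed
  then have "R e w" if "w \<in> insert e B" for w using that refl[of e] by blast
  from this[OF uv(1)] this[OF uv(2)] show "R u v" using sym trans by blast
qed

locale three_blocks =
  fixes c :: "'a::metric_space" and A U :: "'a set" and \<delta> :: real
  assumes c_notin_A: "c \<notin> A" and A_nonempty: "A \<noteq> {}" and U_nonempty: "U \<noteq> {}"
    and A_closer_than_c: "\<And>a b. a \<in> A \<Longrightarrow> b \<in> A \<Longrightarrow> dist b a < dist c a"
    and diam_cA: "\<And>r r'. r \<in> insert c A \<Longrightarrow> r' \<in> insert c A \<Longrightarrow> dist r r' \<le> \<delta>"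
    and diam_U: "\<And>u u'. u \<in> U \<Longrightarrow> u' \<in> U \<Longrightarrow> dist u u' \<le> \<delta>"
    and far_apart: "\<And>r u. r \<in> insert c A \<Longrightarrow> u \<in> U \<Longrightarrow> \<delta> < dist r u"
    and U_unsplittable: "unsplittable U"
begin

abbreviation points :: "'a set" where "points \<equiv> insert c A \<union> U"

lemma notin_U: "r \<in> insert c A \<Longrightarrow> r \<notin> U"
  using far_apart diam_U by force

lemma same_cluster_blocks:
  "same_cluster {{c}, A, U} x y \<longleftrightarrow> (x = c \<and> y = c) \<or> (x \<in> A \<and> y \<in> A) \<or> (x \<in> U \<and> y \<in> U)"
  unfolding same_cluster_def by auto

lemma k_clustering_blocks: "k_clustering 3 {{c}, A, U} points"
proof -
  have "{c} \<noteq> A" "{c} \<noteq> U" "A \<noteq> U" using c_notin_A notin_U A_nonempty by auto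
  moreover have "clustering {{c}, A, U} points"
    unfolding clustering_def using c_notin_A notin_U A_nonempty U_nonempty by auto
  ultimately show ?thesis unfolding k_clustering_def by simp
qed

lemma nice_blocks: "nice {{c}, A, U} points"
  unfolding nice_def same_cluster_blocks
proof (intro ballI impI)
  fix x y z assume "x \<in> points" "y \<in> points" "z \<in> points"
    and "((x = c \<and> y = c) \<or> (x \<in> A \<and> y \<in> A) \<or> (x \<in> U \<and> y \<in> U)) \<and>
      \<not> ((x = c \<and> z = c) \<or> (x \<in> A \<and> z \<in> A) \<or> (x \<in> U \<and> z \<in> U))"
  then consider "x = c" "y = c" "z \<noteq> c" | "x \<in> A" "y \<in> A" "z = c"
    | "x \<in> insert c A" "y \<in> insert c A" "z \<in> U" | "x \<in> U" "y \<in> U" "z \<in> insert c A"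
    by blast
  then show "dist y x < dist z x"
  proof cases
    case 2 then show ?thesis using A_closer_than_c by blast
  next
    case 3 then show ?thesis using diam_cA[of y x] far_apart[of x z] by (simp add: dist_commute)
  next
    case 4 then show ?thesis using diam_U[of y x] far_apart[of z x] by simp
  qed simp
qed

context
  fixes C assumes C3: "k_clustering 3 C points" and C_nice: "nice C points"
begin

lemma C_clustering: "clustering C points"
  using C3 unfolding k_clustering_def by blast

lemma C_nice_at:
  "x \<in> points \<Longrightarrow> y \<in> points \<Longrightarrow> z \<in> points \<Longrightarrow> same_cluster C x y \<Longrightarrow> \<not> same_cluster C x z
    \<Longrightarrow> dist y x < dist z x"
  by (rule niceD[OF C_nice])

lemma C_no_four:
  "t1 \<in> points \<Longrightarrow> t2 \<in> points \<Longrightarrow> t3 \<in> points \<Longrightarrow> t4 \<in> points \<Longrightarrow>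
    \<not> same_cluster C t1 t2 \<Longrightarrow> \<not> same_cluster C t1 t3 \<Longrightarrow> \<not> same_cluster C t1 t4 \<Longrightarrow>
    \<not> same_cluster C t2 t3 \<Longrightarrow> \<not> same_cluster C t2 t4 \<Longrightarrow> \<not> same_cluster C t3 t4 \<Longrightarrow> False"
  by (rule k_clustering_3_no_separated_quadruple[OF C3])

text \<open>Some point z lies outside the cluster of r; whichever side z is on, niceness at the point
  on that side would make the partner across the gap (distance > \<delta>) closer than z (distance
  \<le> \<delta>).\<close>
lemma C_no_mixing:
  assumes r: "r \<in> insert c A" and u: "u \<in> U"
  shows "\<not> same_cluster C r u"
proof
  assume ru: "same_cluster C r u"
  obtain t1 t2 t3 where t: "t1 \<in> points" "t2 \<in> points" "\<not> same_cluster C t1 t2"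
    using k_clustering_3_separated_triple[OF C3] by metis
  obtain z where z: "z \<in> points" "\<not> same_cluster C r z"
    using t same_cluster_sym same_cluster_trans[OF C_clustering] by metis
  show False
  proof (cases "z \<in> U")
    case True
    have "\<not> same_cluster C u z" using z(2) same_cluster_trans[OF C_clustering ru] by blast
    then have "dist r u < dist z u"
      using C_nice_at[of u r z] same_cluster_sym[OF ru] r u z(1) by blast
    then show False using diam_U[OF True u] far_apart[OF r u] by (simp add: dist_commute)
  next
    case False
    then have "dist u r < dist z r" using C_nice_at[of r u z] ru r u z by blast
    then show False using diam_cA[of z r] False z(1) r far_apart[OF r u] by (simp add: dist_commute)
  qed
qed

lemma C_U_together:
  assumes "u \<in> U" "v \<in> U"
  shows "same_cluster C u v"
proof (rule unsplittableD[OF U_unsplittable, of "same_cluster C"])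
  show "same_cluster C x y \<or> same_cluster C x z \<or> same_cluster C y z"
    if "x \<in> U" "y \<in> U" "z \<in> U" for x y z
    using C_no_four[of c x y z] C_no_mixing[of c] that by blast
qed (use assms same_cluster_refl[OF C_clustering] same_cluster_sym same_cluster_trans[OF C_clustering]
      C_nice_at in auto)

lemma C_c_isolated:
  assumes "a \<in> A"
  shows "\<not> same_cluster C c a"
proof
  assume ca: "same_cluster C c a"
  obtain t1 t2 t3 where t: "t1 \<in> points" "t2 \<in> points" "t3 \<in> points"
    "\<not> same_cluster C t1 t2" "\<not> same_cluster C t1 t3" "\<not> same_cluster C t2 t3"
    using k_clustering_3_separated_triple[OF C3] by metis
  then obtain r r' where r: "r \<in> insert c A" "r' \<in> insert c A" "\<not> same_cluster C r r'"
    using C_U_together by blast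
  then have "\<not> same_cluster C c r \<or> \<not> same_cluster C c r'"
    using same_cluster_sym same_cluster_trans[OF C_clustering] by metis
  then obtain b where b: "b \<in> insert c A" "\<not> same_cluster C c b" using r by blast
  with same_cluster_refl[OF C_clustering, of c] have "b \<in> A" by auto
  have "\<not> same_cluster C a b" using b(2) same_cluster_trans[OF C_clustering ca] by blast
  then have "dist c a < dist b a"
    using C_nice_at[of a c b] same_cluster_sym[OF ca] assms \<open>b \<in> A\<close> by blast
  then show False using A_closer_than_c[OF assms \<open>b \<in> A\<close>] by simp
qed

lemma C_A_together:
  assumes "a \<in> A" "a' \<in> A"
  shows "same_cluster C a a'"
proof (rule ccontr)
  assume "\<not> same_cluster C a a'"
  moreover obtain u where "u \<in> U" using U_nonempty by blast
  ultimately show False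
    using C_no_four[of c a a' u] C_c_isolated[OF assms(1)] C_c_isolated[OF assms(2)]
      C_no_mixing[of c u] C_no_mixing[of a u] C_no_mixing[of a' u] assms by blast
qed

lemma C_same_cluster_iff:
  assumes "x \<in> points" "y \<in> points"
  shows "same_cluster C x y \<longleftrightarrow> (x = c \<and> y = c) \<or> (x \<in> A \<and> y \<in> A) \<or> (x \<in> U \<and> y \<in> U)"
proof -
  consider "x = c" "y = c" | "x \<in> A" "y \<in> A" | "x \<in> U" "y \<in> U"
    | "x \<in> insert c A" "y \<in> U" | "x \<in> U" "y \<in> insert c A" | "x = c" "y \<in> A" | "x \<in> A" "y = c"
    using assms by blast
  then show ?thesis
  proof cases
    case 1 then show ?thesis using same_cluster_refl[OF C_clustering] by simp
  next
    case 2 then show ?thesis using C_A_together by simp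
  next
    case 3 then show ?thesis using C_U_together by simp
  next
    case 4 then show ?thesis using C_no_mixing[OF 4] notin_U[OF 4(1)] notin_U[of y] by auto
  next
    case 5 then show ?thesis using C_no_mixing[OF 5(2,1)] notin_U[OF 5(2)] notin_U[of x] same_cluster_sym[of C x y] by auto
  next
    case 6 then show ?thesis using C_c_isolated[OF 6(2)] c_notin_A notin_U[of c] by auto
  next
    case 7 then show ?thesis using C_c_isolated[OF 7(1)] c_notin_A notin_U[of c] same_cluster_sym[of C x y] by auto
  qed
qed

lemma C_eq_blocks: "C = {{c}, A, U}"
proof (rule clustering_eqI_same_cluster[OF C_clustering])
  show "clustering {{c}, A, U} points" using k_clustering_blocks unfolding k_clustering_def by blast
  show "same_cluster C x y \<longleftrightarrow> same_cluster {{c}, A, U} x y" if "x \<in> points" "y \<in> points" for x y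
    by (simp only: C_same_cluster_iff[OF that] same_cluster_blocks)
qed

end

lemma unique_nice_3_clustering_blocks: "unique_nice_3_clustering {{c}, A, U} points"
  unfolding unique_nice_3_clustering_def using k_clustering_blocks nice_blocks C_eq_blocks by blast

end

definition config_points :: "nat \<Rightarrow> 'a \<Rightarrow> (nat \<Rightarrow> 'a) \<Rightarrow> (nat \<Rightarrow> 'a) \<Rightarrow> 'a set" where
  "config_points M xo x x' = {xo} \<union> x ` {1..M} \<union> x' ` {1..M}"

locale configuration =
  fixes M :: nat and xo :: "'a::metric_space" and x x' :: "nat \<Rightarrow> 'a"
  assumes dist_bounds: "\<And>u v. u \<in> config_points M xo x x' \<Longrightarrow> v \<in> config_points M xo x x' \<Longrightarrow> u \<noteq> v
      \<Longrightarrow> 1 \<le> dist u v \<and> dist u v \<le> 2"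
    and center_far: "\<And>i. i \<in> {1..M} \<Longrightarrow> 3/2 < dist xo (x i) \<and> dist xo (x i) \<le> 2 \<and>
      3/2 < dist xo (x' i) \<and> dist xo (x' i) \<le> 2"
    and close: "\<And>i j. i \<in> {1..M} \<Longrightarrow> j \<in> {1..M} \<Longrightarrow> i \<noteq> j \<Longrightarrow>
      dist (x i) (x j) \<in> {1..3/2} \<and> dist (x' i) (x' j) \<in> {1..3/2} \<and> dist (x i) (x' j) \<in> {1..3/2}"
    and partner_far: "\<And>i. i \<in> {1..M} \<Longrightarrow> dist xo (x i) < dist (x i) (x' i)"

lemma M_configuration_obtain:
  assumes "M_configuration M P"
  obtains xo x x' where "P = config_points M xo x x'" "configuration M xo x x'"
  using assms unfolding M_configuration_def
proof (elim exE conjE)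
  fix xo x x'
  assume P: "P = {xo} \<union> x ` {1..M} \<union> x' ` {1..M}"
    and dist_bounds: "\<forall>u\<in>P. \<forall>v\<in>P. u \<noteq> v \<longrightarrow> 1 \<le> dist u v \<and> dist u v \<le> 2"
    and center_far: "\<forall>i\<in>{1..M}. 3/2 < dist xo (x i) \<and> dist xo (x i) \<le> 2 \<and>
                  3/2 < dist xo (x' i) \<and> dist xo (x' i) \<le> 2"
    and close: "\<forall>i\<in>{1..M}. \<forall>j\<in>{1..M}. i \<noteq> j \<longrightarrow>
        dist (x i) (x j) \<in> {1..3/2} \<and> dist (x' i) (x' j) \<in> {1..3/2} \<and> dist (x i) (x' j) \<in> {1..3/2}"
    and partner_far: "\<forall>i\<in>{1..M}. dist (x i) (x' i) > dist xo (x i)"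
  have "P = config_points M xo x x'" unfolding config_points_def by (rule P)
  moreover have "configuration M xo x x'"
    by unfold_locales (use dist_bounds center_far close partner_far \<open>P = config_points M xo x x'\<close> in auto)
  ultimately show thesis by (rule that)
qed

context configuration
begin

abbreviation points :: "'a set" where "points \<equiv> config_points M xo x x'"

definition sub_config :: "nat set \<Rightarrow> nat \<Rightarrow> 'a set" where
  "sub_config V j = insert xo (insert (x' j) (x ` V))"

lemma points_memI: "xo \<in> points" "i \<in> {1..M} \<Longrightarrow> x i \<in> points" "i \<in> {1..M} \<Longrightarrow> x' i \<in> points"
  unfolding config_points_def by auto

lemma sub_config_subset: "V \<subseteq> {1..M} \<Longrightarrow> j \<in> {1..M} \<Longrightarrow> sub_config V j \<subseteq> points"
  unfolding sub_config_def config_points_def by auto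

lemma dist_le_2: "u \<in> points \<Longrightarrow> v \<in> points \<Longrightarrow> dist u v \<le> 2"
  using dist_bounds by (cases "u = v") auto

lemma center_neq: "i \<in> {1..M} \<Longrightarrow> x i \<noteq> xo" "i \<in> {1..M} \<Longrightarrow> x' i \<noteq> xo"
  using center_far by force+

lemma x_neq_x': "i \<in> {1..M} \<Longrightarrow> j \<in> {1..M} \<Longrightarrow> x i \<noteq> x' j"
  using close[of i j] center_far[of i] partner_far[of i] by (cases "i = j") force+

lemma inj_on_x: "inj_on x {1..M}"
proof (rule inj_onI)
  fix i j assume "i \<in> {1..M}" "j \<in> {1..M}" "x i = x j"
  then show "i = j" using close[of i j] by (cases "i = j") auto
qed

lemma dist_le_three_halves:
  assumes V: "V \<subseteq> {1..M}" and j: "j \<in> {1..M}"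
    and a: "a \<in> insert (x' j) (x ` V)" and b: "b \<in> insert (x' j) (x ` V)"
    and ab: "a \<noteq> b" "{a, b} \<noteq> {x j, x' j}"
  shows "dist a b \<le> 3/2"
  using a b
proof (elim insertE imageE)
  fix i l assume "a = x i" "i \<in> V" "b = x l" "l \<in> V"
  moreover have "i \<noteq> l" using calculation ab(1) by blast
  ultimately show ?thesis using close[of i l] V by (auto simp: subset_iff)
next
  fix i assume "a = x i" "i \<in> V" "b = x' j"
  then show ?thesis using close[of i j] ab V j by (auto simp: subset_iff)
next
  fix l assume "a = x' j" "b = x l" "l \<in> V"
  then show ?thesis using close[of l j] ab V j by (auto simp: dist_commute insert_commute subset_iff)
qed (use ab in simp)

lemma center_farthest:
  assumes V: "V \<subseteq> {1..M}" and j: "j \<in> {1..M}" "j \<notin> V"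
  shows "xo \<notin> insert (x' j) (x ` V)"
    and "\<And>a b. a \<in> insert (x' j) (x ` V) \<Longrightarrow> b \<in> insert (x' j) (x ` V) \<Longrightarrow> dist b a < dist xo a"
proof -
  show "xo \<notin> insert (x' j) (x ` V)" using center_neq V j by blast
  fix a b assume a: "a \<in> insert (x' j) (x ` V)" and b: "b \<in> insert (x' j) (x ` V)"
  have "3/2 < dist xo a" using a center_far V j by blast
  moreover have "x j \<notin> insert (x' j) (x ` V)"
    using x_neq_x'[OF j(1) j(1)] inj_on_x V j unfolding inj_on_def by blast
  then have "x j \<noteq> a" "x j \<noteq> b" using a b by auto
  then have "{b, a} \<noteq> {x j, x' j}" by (simp add: doubleton_eq_iff)
  then have "dist b a \<le> 3/2" if "a \<noteq> b"
    using dist_le_three_halves[OF V j(1) b a] that by blast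
  ultimately show "dist b a < dist xo a" by (cases "a = b") auto
qed

lemma unsplittable_sub_config:
  assumes V: "V \<subseteq> {1..M}" and j: "j \<in> V" and k: "k \<in> V" "k \<noteq> j"
  shows "unsplittable (sub_config V j)"
  unfolding sub_config_def
proof (rule unsplittable_insert_far[where \<delta>="3/2" and p="x j" and p'="x' j" and k="x k"])
  have jI: "j \<in> {1..M}" and kI: "k \<in> {1..M}" using V j k by auto
  show "3/2 < dist xo b" if "b \<in> insert (x' j) (x ` V)" for b
    using that center_far V jI by blast
  show "dist a a' \<le> 3/2" if "a \<in> insert (x' j) (x ` V)" "a' \<in> insert (x' j) (x ` V)" "{a, a'} \<noteq> {x j, x' j}"
    for a a'
  proof (cases "a = a'")
    case False
    then show ?thesis using dist_le_three_halves[OF V jI that(1,2) _ that(3)] by blast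
  qed simp
  show "x j \<in> insert (x' j) (x ` V)" "x' j \<in> insert (x' j) (x ` V)" "x k \<in> insert (x' j) (x ` V)"
    using j k by auto
  show "dist xo (x j) < dist (x j) (x' j)" using partner_far[OF jI] .
  show "x k \<noteq> x j" using inj_on_x kI jI k(2) unfolding inj_on_def by blast
  show "x k \<noteq> x' j" using x_neq_x'[OF kI jI] .
qed

end

locale separated_configurations =
  P: configuration M xo x x' + Q: configuration M yo y y'
  for M :: nat and xo :: "'a::metric_space" and x x' and yo :: "'a" and y y' +
  assumes far_apart: "\<And>u v. u \<in> config_points M xo x x' \<Longrightarrow> v \<in> config_points M yo y y' \<Longrightarrow> 4 \<le> dist u v"
begin

lemma swap: "separated_configurations M yo y y' xo x x'"
  by (intro separated_configurations.intro separated_configurations_axioms.intro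
      Q.configuration_axioms P.configuration_axioms) (metis far_apart dist_commute)

lemma points_disjoint: "u \<in> config_points M xo x x' \<Longrightarrow> v \<in> config_points M yo y y' \<Longrightarrow> u \<noteq> v"
  using far_apart by force

lemma three_blocks_across:
  assumes "insert c A \<subseteq> config_points M xo x x'" "U \<subseteq> config_points M yo y y'"
    and "c \<notin> A" "A \<noteq> {}" "U \<noteq> {}" "\<And>a b. a \<in> A \<Longrightarrow> b \<in> A \<Longrightarrow> dist b a < dist c a"
    and "unsplittable U"
  shows "three_blocks c A U 2"
proof
  show "dist r r' \<le> 2" if "r \<in> insert c A" "r' \<in> insert c A" for r r'
    using P.dist_le_2 assms(1) that by blast
  show "dist u u' \<le> 2" if "u \<in> U" "u' \<in> U" for u u'
    using Q.dist_le_2 assms(2) that by blast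
  show "2 < dist r u" if "r \<in> insert c A" "u \<in> U" for r u
    using far_apart[of r u] assms(1,2) that by fastforce
qed (use assms in auto)

lemma unique_nice_3_clustering_sub_configs:
  assumes V: "V \<subseteq> {1..M}" "j \<in> {1..M}" "j \<notin> V" and W: "W \<subseteq> {1..M}" "j \<in> W" "k \<in> W" "k \<noteq> j"
  obtains C where "unique_nice_3_clustering C (P.sub_config V j \<union> Q.sub_config W j)"
    "\<not> same_cluster C xo (x' j)" "same_cluster C yo (y' j)"
proof -
  let ?A = "insert (x' j) (x ` V)" and ?U = "Q.sub_config W j"
  have sub: "insert xo ?A \<subseteq> config_points M xo x x'" "?U \<subseteq> config_points M yo y y'"
    using P.sub_config_subset[OF V(1,2)] Q.sub_config_subset[OF W(1)] V(2) unfolding P.sub_config_def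
    by auto
  interpret three_blocks xo ?A ?U 2
  proof (rule three_blocks_across)
    show "xo \<notin> ?A" "\<And>a b. a \<in> ?A \<Longrightarrow> b \<in> ?A \<Longrightarrow> dist b a < dist xo a"
      using P.center_farthest[OF V] by blast+
    show "?U \<noteq> {}" unfolding Q.sub_config_def by simp
    show "unsplittable ?U" using Q.unsplittable_sub_config[OF W] .
  qed (use sub in auto)
  show thesis
  proof (rule that)
    show "unique_nice_3_clustering {{xo}, ?A, ?U} (P.sub_config V j \<union> ?U)"
      using unique_nice_3_clustering_blocks unfolding P.sub_config_def by simp
    show "\<not> same_cluster {{xo}, ?A, ?U} xo (x' j)"
      unfolding same_cluster_blocks using P.center_farthest(1)[OF V] notin_U[of xo] by auto
    show "same_cluster {{xo}, ?A, ?U} yo (y' j)"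
      unfolding same_cluster_blocks by (simp add: Q.sub_config_def)
  qed
qed

end

definition finds_unique_nice_3_clusterings ::
  "bool list \<Rightarrow> (bool list \<Rightarrow> 'a \<Rightarrow> bool list) \<Rightarrow> (bool list \<Rightarrow> 'a::metric_space set set) \<Rightarrow> bool" where
  "finds_unique_nice_3_clusterings \<sigma>0 \<tau> \<omega> \<longleftrightarrow> (\<forall>D C. finite D \<and> unique_nice_3_clustering C D \<longrightarrow>
     (\<forall>xs. distinct xs \<and> set xs = D \<longrightarrow> restrict_partition (\<omega> (run_alg \<sigma>0 \<tau> xs)) D = C))"

lemma finds_unique_nice_3_clusteringsD:
  assumes "finds_unique_nice_3_clusterings \<sigma>0 \<tau> \<omega>" "unique_nice_3_clustering C (set xs)" "distinct xs"
    "u \<in> set xs" "v \<in> set xs"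
  shows "same_cluster (\<omega> (run_alg \<sigma>0 \<tau> xs)) u v \<longleftrightarrow> same_cluster C u v"
proof -
  have "restrict_partition (\<omega> (run_alg \<sigma>0 \<tau> xs)) (set xs) = C"
    using assms(1-3) unfolding finds_unique_nice_3_clusterings_def by blast
  then show ?thesis using same_cluster_restrict_partition[OF assms(4,5)] by metis
qed

lemma run_alg_length:
  assumes "incremental_alg b \<sigma>0 \<tau> \<omega>"
  shows "length (run_alg \<sigma>0 \<tau> xs) = b"
proof -
  have "length (foldl \<tau> \<sigma> xs) = b" if "length \<sigma> = b" for \<sigma>
    using that assms unfolding incremental_alg_def by (induction xs arbitrary: \<sigma>) simp_all
  then show ?thesis using assms unfolding incremental_alg_def run_alg_def by blast
qed

lemma run_alg_append: "run_alg \<sigma>0 \<tau> (xs @ ys) = foldl \<tau> (run_alg \<sigma>0 \<tau> xs) ys"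
  unfolding run_alg_def by simp

lemma separating_index_pair:
  fixes S T :: "nat set"
  assumes S: "S \<subseteq> {1..M}" "S \<noteq> {2..M}" and T: "T \<subseteq> {1..M}" "T \<noteq> {2..M}"
    and j: "j \<in> S" "j \<notin> T"
  shows "(\<exists>j k. j \<in> S \<and> j \<notin> T \<and> k \<in> {1..M} \<and> k \<noteq> j \<and> (k \<in> S \<or> k \<notin> T)) \<or>
    (\<exists>j k. j \<in> T \<and> j \<notin> S \<and> k \<in> {1..M} \<and> k \<noteq> j \<and> (k \<in> T \<or> k \<notin> S))"
proof (rule ccontr)
  assume none: "\<not> ?thesis"
  have stuck_ST: "k \<notin> S \<and> k \<in> T" if "i \<in> S" "i \<notin> T" "k \<in> {1..M}" "k \<noteq> i" for i k
    using none that by blast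
  have stuck_TS: "k \<notin> T \<and> k \<in> S" if "i \<in> T" "i \<notin> S" "k \<in> {1..M}" "k \<noteq> i" for i k
    using none that by blast
  have ST: "S = {j}" "T = {1..M} - {j}" using stuck_ST S(1) T(1) j by blast+
  have "T \<noteq> {}"
  proof
    assume "T = {}"
    then have "{1..M} = {j}" using ST S(1) by blast
    then have "M = 1" "j = 1" by (metis atLeastAtMost_singleton_iff)+
    then show False using \<open>T = {}\<close> T(2) by simp
  qed
  then obtain j' where j': "j' \<in> T" "j' \<notin> S" using ST by blast
  have ST': "T = {j'}" "S = {1..M} - {j'}" using stuck_TS S(1) T(1) j' by blast+
  have I: "{1..M} = {j, j'}" using ST ST' S(1) by blast
  moreover have "j \<noteq> j'" using j' ST by blast
  ultimately have "M = 2" using card_atLeastAtMost[of 1 M] by simp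
  then have "{1..M} = {1, 2::nat}" by auto
  with I have "j = 1 \<and> j' = 2 \<or> j = 2 \<and> j' = 1" by (simp add: doubleton_eq_iff)
  then show False using ST(1) ST'(1) S(2) T(2) \<open>M = 2\<close> by auto
qed

lemma separating_indices:
  fixes S T :: "nat set"
  assumes S: "S \<subseteq> {1..M}" and T: "T \<subseteq> {1..M}" and "S \<noteq> T" "S \<noteq> {2..M}" "T \<noteq> {2..M}"
  obtains j k where "j \<in> S" "j \<notin> T" "k \<in> {1..M}" "k \<noteq> j" "k \<in> S \<or> k \<notin> T"
    | j k where "j \<in> T" "j \<notin> S" "k \<in> {1..M}" "k \<noteq> j" "k \<in> T \<or> k \<notin> S"
proof -
  obtain j where "j \<in> S \<and> j \<notin> T \<or> j \<in> T \<and> j \<notin> S" using \<open>S \<noteq> T\<close> by blast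
  then show thesis
    using separating_index_pair[OF S assms(4) T assms(5)] separating_index_pair[OF T assms(5) S assms(4)]
      that by blast
qed

context separated_configurations
begin

definition mixed_points :: "nat set \<Rightarrow> 'a set" where
  "mixed_points S = x ` S \<union> y ` ({1..M} - S)"

lemma finite_mixed_points: "S \<subseteq> {1..M} \<Longrightarrow> finite (mixed_points S)"
  unfolding mixed_points_def by (auto intro: finite_subset)

definition common_suffix :: "nat set \<Rightarrow> nat set \<Rightarrow> nat \<Rightarrow> 'a set" where
  "common_suffix S T j = {x' j, y' j, xo, yo} \<union> x ` ({1..M} - (S \<union> T)) \<union> y ` (S \<inter> T)"

lemma finite_common_suffix: "S \<subseteq> {1..M} \<Longrightarrow> finite (common_suffix S T j)"
  unfolding common_suffix_def by (auto intro: finite_subset)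

lemma mixed_points_Int_common_suffix:
  assumes S: "S \<subseteq> {1..M}" and j: "j \<in> {1..M}"
  shows "mixed_points S \<inter> common_suffix S T j = {}"
proof -
  let ?X = "{1..M} - (S \<union> T)" and ?Y = "S \<inter> T"
  have "x ` S \<inter> x ` ?X = {}"
    using inj_on_image_Int[OF P.inj_on_x S, of ?X] by auto
  moreover have "x i \<notin> {x' j, xo}" if "i \<in> S" for i
    using that S P.x_neq_x'[of i j] j P.center_neq(1)[of i] by auto
  ultimately have P_part: "x ` S \<inter> (x ` ?X \<union> {x' j, xo}) = {}" by blast
  have "y ` ({1..M} - S) \<inter> y ` ?Y = {}"
    using inj_on_image_Int[OF Q.inj_on_x Diff_subset[of _ S], of ?Y] S by auto
  moreover have "y i \<notin> {y' j, yo}" if "i \<in> {1..M}" for i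
    using that Q.x_neq_x'[of i j] j Q.center_neq(1)[of i] by auto
  ultimately have Q_part: "y ` ({1..M} - S) \<inter> (y ` ?Y \<union> {y' j, yo}) = {}" by blast
  have "x ` S \<union> (x ` ?X \<union> {x' j, xo}) \<subseteq> config_points M xo x x'"
    using S j P.points_memI by auto
  moreover have "y ` ({1..M} - S) \<union> (y ` ?Y \<union> {y' j, yo}) \<subseteq> config_points M yo y y'"
    using S j Q.points_memI by auto
  moreover have "config_points M xo x x' \<inter> config_points M yo y y' = {}"
    using points_disjoint by blast
  ultimately have PQ_part:
    "(x ` S \<union> (x ` ?X \<union> {x' j, xo})) \<inter> (y ` ({1..M} - S) \<union> (y ` ?Y \<union> {y' j, yo})) = {}"
    by (metis Int_mono subset_empty)
  have "(A1 \<union> A2) \<inter> (B1 \<union> B2) = {}"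
    if "A1 \<inter> B1 = {}" "A2 \<inter> B2 = {}" "(A1 \<union> B1) \<inter> (A2 \<union> B2) = {}" for A1 A2 B1 B2 :: "'a set"
    using that by blast
  from this[OF P_part Q_part PQ_part] show ?thesis
    unfolding mixed_points_def common_suffix_def by (simp add: insert_commute Un_ac)
qed

lemma mixed_points_Un_common_suffix:
  assumes "S \<subseteq> {1..M}" "T \<subseteq> {1..M}"
  shows "mixed_points S \<union> common_suffix S T j
    = P.sub_config (S \<union> ({1..M} - T)) j \<union> Q.sub_config (T \<union> ({1..M} - S)) j"
proof -
  have "S \<union> ({1..M} - T) = S \<union> ({1..M} - (S \<union> T))" "T \<union> ({1..M} - S) = ({1..M} - S) \<union> (S \<inter> T)"
    using assms by auto
  then show ?thesis
    unfolding mixed_points_def common_suffix_def P.sub_config_def Q.sub_config_def image_Un by auto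
qed

text \<open>After the prefix for S the P-part of the data contains x j and x k, so the centre and
  x' j must share a cluster; after the prefix for T it lacks x j, so the centre is a singleton.\<close>
lemma equal_states_impossible:
  assumes correct: "finds_unique_nice_3_clusterings \<sigma>0 \<tau> \<omega>"
    and S: "S \<subseteq> {1..M}" and T: "T \<subseteq> {1..M}"
    and ps: "distinct ps" "set ps = mixed_points S" and pt: "distinct pt" "set pt = mixed_points T"
    and same_state: "run_alg \<sigma>0 \<tau> ps = run_alg \<sigma>0 \<tau> pt"
    and j: "j \<in> S" "j \<notin> T" and k: "k \<in> {1..M}" "k \<noteq> j" "k \<in> S \<or> k \<notin> T"
  shows False
proof -
  interpret swapped: separated_configurations M yo y y' xo x x' by (rule swap)
  define V1 where "V1 = S \<union> ({1..M} - T)"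
  define V2 where "V2 = T \<union> ({1..M} - S)"
  have jI: "j \<in> {1..M}" using j S by blast
  have V: "V1 \<subseteq> {1..M}" "V2 \<subseteq> {1..M}" "j \<in> V1" "j \<notin> V2" "k \<in> V1"
    unfolding V1_def V2_def using S T j k by auto
  obtain cs where cs: "distinct cs" "set cs = common_suffix S T j"
    using finite_distinct_list[OF finite_common_suffix[OF S]] by blast
  have "common_suffix T S j = common_suffix S T j"
    unfolding common_suffix_def by (simp add: Un_commute Int_commute)
  then have "set ps \<inter> set cs = {}" "set pt \<inter> set cs = {}"
    and sets: "set (ps @ cs) = Q.sub_config V2 j \<union> P.sub_config V1 j"
      "set (pt @ cs) = P.sub_config V2 j \<union> Q.sub_config V1 j"
    using mixed_points_Int_common_suffix[OF S jI, of T] mixed_points_Int_common_suffix[OF T jI, of S]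
      mixed_points_Un_common_suffix[OF S T, of j] mixed_points_Un_common_suffix[OF T S, of j]
    unfolding set_append ps(2) pt(2) cs(2) V1_def V2_def by auto
  then have distinct: "distinct (ps @ cs)" "distinct (pt @ cs)" using ps(1) pt(1) cs(1) by simp_all
  obtain C1 where C1: "unique_nice_3_clustering C1 (set (ps @ cs))" "same_cluster C1 xo (x' j)"
    using swapped.unique_nice_3_clustering_sub_configs[OF V(2) jI V(4) V(1) V(3) V(5) k(2)] sets(1)
    by metis
  obtain C2 where C2: "unique_nice_3_clustering C2 (set (pt @ cs))" "\<not> same_cluster C2 xo (x' j)"
    using unique_nice_3_clustering_sub_configs[OF V(2) jI V(4) V(1) V(3) V(5) k(2)] sets(2)
    by metis
  have mem: "xo \<in> set (ps @ cs)" "x' j \<in> set (ps @ cs)" "xo \<in> set (pt @ cs)" "x' j \<in> set (pt @ cs)"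
    unfolding sets P.sub_config_def by auto
  have "run_alg \<sigma>0 \<tau> (ps @ cs) = run_alg \<sigma>0 \<tau> (pt @ cs)" using same_state by (simp add: run_alg_append)
  then show False
    using finds_unique_nice_3_clusteringsD[OF correct C1(1) distinct(1) mem(1,2)]
      finds_unique_nice_3_clusteringsD[OF correct C2(1) distinct(2) mem(3,4)] C1(2) C2(2) by simp
qed

end

lemma two_pow_lt_subsets:
  assumes "2 * b \<le> M" "2 \<le> M"
  shows "(2::nat) ^ b < 2 ^ M - 1"
proof -
  obtain m where M: "M = Suc (Suc m)" using assms(2) by (metis add_2_eq_Suc le_Suc_ex)
  have "(2::nat) ^ b \<le> 2 ^ Suc m" using assms M by (intro power_increasing) auto
  moreover have "(2::nat) ^ Suc m = 2 * 2 ^ m" "(2::nat) ^ M = 4 * 2 ^ m" "(1::nat) \<le> 2 ^ m"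
    using M by simp_all
  ultimately show ?thesis by linarith
qed

context separated_configurations
begin

text \<open>Removing {2..M} from the prefixes excludes the pair {1}, {2} for M = 2, the only pair for
  which no separating indices exist.\<close>
lemma lower_bound_two_or_more:
  fixes \<sigma>0 :: "bool list" and \<tau> :: "bool list \<Rightarrow> 'a \<Rightarrow> bool list" and \<omega> :: "bool list \<Rightarrow> 'a set set"
  assumes alg: "incremental_alg b \<sigma>0 \<tau> \<omega>" and correct: "finds_unique_nice_3_clusterings \<sigma>0 \<tau> \<omega>"
    and b: "2 * b \<le> M" and M: "2 \<le> M"
  shows False
proof -
  let ?F = "Pow {1..M} - {{2..M}}"
  define ps where "ps S = (SOME xs. set xs = mixed_points S \<and> distinct xs)" for S
  have ps: "distinct (ps S)" "set (ps S) = mixed_points S" if "S \<subseteq> {1..M}" for S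
    using someI_ex[OF finite_distinct_list[OF finite_mixed_points[OF that]]] unfolding ps_def by blast+
  define state where "state S = run_alg \<sigma>0 \<tau> (ps S)" for S
  have "\<not> inj_on state ?F"
  proof
    assume "inj_on state ?F"
    moreover have "state ` ?F \<subseteq> {s. set s \<subseteq> UNIV \<and> length s = b}"
      unfolding state_def using run_alg_length[OF alg] by auto
    ultimately have "card ?F \<le> card {s. set s \<subseteq> (UNIV :: bool set) \<and> length s = b}"
      by (intro card_inj_on_le finite_lists_length_eq) auto
    also have "\<dots> = 2 ^ b" using card_lists_length_eq[of "UNIV :: bool set" b] by simp
    also have "\<dots> < 2 ^ M - 1" using two_pow_lt_subsets[OF b M] .
    also have "2 ^ M - 1 = card ?F" by (simp add: card_Diff_singleton card_Pow)
    finally show False by simp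
  qed
  then obtain S T where ST: "S \<subseteq> {1..M}" "T \<subseteq> {1..M}" "S \<noteq> T" "S \<noteq> {2..M}" "T \<noteq> {2..M}"
    "state S = state T"
    unfolding inj_on_def by blast
  then show False
  proof (cases rule: separating_indices)
    case (1 j k)
    with ST(6) show False
      using equal_states_impossible[OF correct ST(1,2) ps[OF ST(1)] ps[OF ST(2)]] unfolding state_def by blast
  next
    case (2 j k)
    with ST(6) show False
      using equal_states_impossible[OF correct ST(2,1) ps[OF ST(2)] ps[OF ST(1)]] unfolding state_def by metis
  qed
qed

text \<open>Without memory the output is the partition for the empty state on every input. The data
  set {xo, x 1, yo} forces xo to be apart from x 1 (and likewise from x' 1), while, depending
  on which of x 1, x' 1 is closer to xo, a data set with the farther point isolated (or, if
  both are equally far, with all three of them as one unsplittable cluster) forces xo together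
  with the other.\<close>
lemma lower_bound_one:
  fixes \<sigma>0 :: "bool list" and \<tau> :: "bool list \<Rightarrow> 'a \<Rightarrow> bool list" and \<omega> :: "bool list \<Rightarrow> 'a set set"
  assumes M: "M = 1" and alg: "incremental_alg 0 \<sigma>0 \<tau> \<omega>" and correct: "finds_unique_nice_3_clusterings \<sigma>0 \<tau> \<omega>"
  shows False
proof -
  interpret swapped: separated_configurations M yo y y' xo x x' by (rule swap)
  have output_blocks: "same_cluster (\<omega> []) u v \<longleftrightarrow> same_cluster {{c}, A, U} u v"
    if blocks: "three_blocks c A U \<delta>" and fin: "finite (insert c A \<union> U)"
      and uv: "u \<in> insert c A \<union> U" "v \<in> insert c A \<union> U"
    for c A U u v and \<delta> :: real
  proof -
    obtain xs where xs: "set xs = insert c A \<union> U" "distinct xs" using finite_distinct_list[OF fin] by blast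
    have "run_alg \<sigma>0 \<tau> xs = []" using run_alg_length[OF alg] by simp
    then show ?thesis
      using finds_unique_nice_3_clusteringsD[OF correct _ xs(2)] xs(1) uv
        three_blocks.unique_nice_3_clustering_blocks[OF blocks] by metis
  qed
  have I: "1 \<in> {1..M}" using M by simp
  let ?a = "x 1" and ?a' = "x' 1"
  have mem: "xo \<in> config_points M xo x x'" "?a \<in> config_points M xo x x'" "?a' \<in> config_points M xo x x'"
    "yo \<in> config_points M yo y y'" "y 1 \<in> config_points M yo y y'"
    using P.points_memI Q.points_memI I by auto
  have neq: "?a \<noteq> xo" "?a' \<noteq> xo" "?a \<noteq> ?a'" "y 1 \<noteq> yo"
    using P.center_neq[OF I] P.x_neq_x'[OF I I] Q.center_neq[OF I] by auto
  have partner: "dist xo ?a < dist ?a ?a'" using P.partner_far[OF I] .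
  have center_apart: "\<not> same_cluster (\<omega> []) xo z" if "z \<in> {?a, ?a'}" for z
  proof -
    have "three_blocks xo {z} {yo} 2"
      by (rule three_blocks_across) (use that mem neq in \<open>auto intro: unsplittable_singleton\<close>)
    then show ?thesis
      using output_blocks[of xo "{z}" "{yo}" 2 xo z] three_blocks.same_cluster_blocks that neq by fastforce
  qed
  consider "dist xo ?a < dist xo ?a'" | "dist xo ?a' < dist xo ?a" | "dist xo ?a = dist xo ?a'" by linarith
  then show False
  proof cases
    case 1
    have "three_blocks ?a' {xo, ?a} {yo} 2"
    proof (rule three_blocks_across)
      show "dist b a < dist ?a' a" if "a \<in> {xo, ?a}" "b \<in> {xo, ?a}" for a b
        using that 1 partner neq by (auto simp: dist_commute)
    qed (use mem neq in \<open>auto intro: unsplittable_singleton\<close>)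
    then have "same_cluster (\<omega> []) xo ?a"
      using output_blocks[of ?a' "{xo, ?a}" "{yo}" 2 xo ?a] three_blocks.same_cluster_blocks by fastforce
    then show False using center_apart by blast
  next
    case 2
    have "three_blocks ?a {xo, ?a'} {yo} 2"
    proof (rule three_blocks_across)
      show "dist b a < dist ?a a" if "a \<in> {xo, ?a'}" "b \<in> {xo, ?a'}" for a b
        using that 2 partner neq by (auto simp: dist_commute)
    qed (use mem neq in \<open>auto intro: unsplittable_singleton\<close>)
    then have "same_cluster (\<omega> []) xo ?a'"
      using output_blocks[of ?a "{xo, ?a'}" "{yo}" 2 xo ?a'] three_blocks.same_cluster_blocks by fastforce
    then show False using center_apart by blast
  next
    case 3
    have "three_blocks yo {y 1} {xo, ?a, ?a'} 2"
    proof (rule swapped.three_blocks_across)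
      show "unsplittable {xo, ?a, ?a'}" using unsplittable_isosceles[OF 3] partner
        by (simp add: dist_commute)
    qed (use mem neq in auto)
    then have "same_cluster (\<omega> []) xo ?a"
      using output_blocks[of yo "{y 1}" "{xo, ?a, ?a'}" 2 xo ?a] three_blocks.same_cluster_blocks by fastforce
    then show False using center_apart by blast
  qed
qed

end

theorem mainTheorem2:
  fixes P Q :: "'a::metric_space set" and M b :: nat
  assumes "M > 0"
    and "M_configuration M P" and "M_configuration M Q"
    and "\<forall>u\<in>P. \<forall>v\<in>Q. dist u v \<ge> 4"
    and "2 * b \<le> M"
  shows "\<not> (\<exists>\<sigma>0 \<tau> (\<omega> :: bool list \<Rightarrow> 'a set set). incremental_alg b \<sigma>0 \<tau> \<omega> \<and>
            (\<forall>D C. finite D \<and> unique_nice_3_clustering C D \<longrightarrow>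
               (\<forall>xs. distinct xs \<and> set xs = D \<longrightarrow>
                  restrict_partition (\<omega> (run_alg \<sigma>0 \<tau> xs)) D = C)))"
  unfolding finds_unique_nice_3_clusterings_def[symmetric]
proof (intro notI, elim exE conjE)
  fix \<sigma>0 \<tau> and \<omega> :: "bool list \<Rightarrow> 'a set set"
  assume alg: "incremental_alg b \<sigma>0 \<tau> \<omega>" and correct: "finds_unique_nice_3_clusterings \<sigma>0 \<tau> \<omega>"
  obtain xo x x' where P: "P = config_points M xo x x'" "configuration M xo x x'"
    using assms(2) by (rule M_configuration_obtain)
  obtain yo y y' where Q: "Q = config_points M yo y y'" "configuration M yo y y'"
    using assms(3) by (rule M_configuration_obtain)
  interpret separated_configurations M xo x x' yo y y'
    using P Q assms(4) by (intro separated_configurations.intro separated_configurations_axioms.intro) auto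
  show False
  proof (cases "M = 1")
    case True
    with assms(5) have "b = 0" by simp
    with True alg correct show False by (intro lower_bound_one) simp_all
  next
    case False
    with assms(1) have "2 \<le> M" by simp
    with alg correct assms(5) show False by (rule lower_bound_two_or_more)
  qed
qed

end
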